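(* (a) Fix an odd positive integer $k$. For a permutation of $[n]$ chosen uniformly among those with all cycle lengths odd, the expected number $\mathbb{E}_o^{(n)}Y_k$ of elements in $k$-cycles satisfies $\mathbb{E}_o^{(n)}Y_k=1+\frac{k+1}{2n}+O(n^{-2})$ as $n\to\infty$ through even values, and $\mathbb{E}_o^{(n)}Y_k=1+\frac{k-1}{2n}+O(n^{-2})$ as $n\to\infty$ through odd values. (b) Fix an even positive integer $k$. For a permutation of $[n]$ chosen uniformly among those with all cycle lengths even, $\mathbb{E}_e^{(n)}Y_k=1+\frac{k}{2n}+O(n^{-2})$ as $n\to\infty$ through even values.
   Context: $\mathbb{E}_o^{(n)}$ (resp. $\mathbb{E}_e^{(n)}$) denotes expectation under the uniform measure on permutations of $[n]$ with all cycle lengths odd (resp. even). $Y_k=kX_k$, where $X_k$ is the number of $k$-cycles, i.e. $Y_k$ is the number of elements lying in $k$-cycles. *)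

theory Defs
  imports "HOL-Analysis.Analysis" "HOL-Combinatorics.Combinatorics"
begin

definition cycle_len :: "(nat \<Rightarrow> nat) \<Rightarrow> nat \<Rightarrow> nat" where
  "cycle_len p x = card (orbit p x)"

definition perms_with :: "(nat \<Rightarrow> bool) \<Rightarrow> nat \<Rightarrow> (nat \<Rightarrow> nat) set" where
  "perms_with P n = {p. p permutes {1..n} \<and> (\<forall>x\<in>{1..n}. P (cycle_len p x))}"

definition Y :: "nat \<Rightarrow> nat \<Rightarrow> (nat \<Rightarrow> nat) \<Rightarrow> nat" where
  "Y n k p = card {x\<in>{1..n}. cycle_len p x = k}"

definition EY :: "(nat \<Rightarrow> bool) \<Rightarrow> nat \<Rightarrow> nat \<Rightarrow> real" where
  "EY P n k = (\<Sum>p\<in>perms_with P n. real (Y n k p)) / real (card (perms_with P n))"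

abbreviation EYo :: "nat \<Rightarrow> nat \<Rightarrow> real" where "EYo \<equiv> EY odd"
abbreviation EYe :: "nat \<Rightarrow> nat \<Rightarrow> real" where "EYe \<equiv> EY even"

end

theory Submission
  imports Defs
begin

text \<open>
  A permutation whose cycle through a fixed point \<open>x\<close> is the set \<open>C\<close> amounts to a cyclic
  permutation of \<open>C\<close>, of which there are \<open>(|C| - 1)!\<close>, together with an arbitrary permutation
  of the complement. Hence the probability \<open>b(n)\<close> that a uniform permutation of \<open>[n]\<close> has all
  cycle lengths in \<open>P\<close> satisfies \<open>n b(n) = \<Sum> b(n - k)\<close> over \<open>k \<le> n\<close> with \<open>P k\<close>, and the same decomposition
  gives \<open>E Y\<^sub>k = b(n - k) / b(n)\<close>. For odd cycles the recursion collapses to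
  \<open>n b(n) = b(n - 1) + (n - 2) b(n - 2)\<close>, for even cycles to \<open>n b(n) = (n - 1) b(n - 2)\<close>; both are
  solved in terms of \<open>c(m) = \<Prod>\<^bsub>i < m\<^esub> (2i + 1)/(2i + 2)\<close>, and
  \<open>c(m - r) / c(m) = \<Prod>\<^bsub>m - r \<le> i < m\<^esub> (1 + 1/(2i + 1)) = 1 + r/(2m) + O(r\<^sup>2/m\<^sup>2)\<close>.
\<close>

definition perms_on_with :: "(nat \<Rightarrow> bool) \<Rightarrow> 'a set \<Rightarrow> ('a \<Rightarrow> 'a) set" where
  "perms_on_with P S = {p. p permutes S \<and> (\<forall>x\<in>S. P (card (orbit p x)))}"

definition cyclic_perms :: "'a \<Rightarrow> 'a set \<Rightarrow> ('a \<Rightarrow> 'a) set" where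
  "cyclic_perms x C = {q. q permutes C \<and> orbit q x = C}"

lemma perms_with_eq_perms_on_with: "perms_with P n = perms_on_with P {1..n}"
  by (simp add: perms_with_def perms_on_with_def cycle_len_def)

lemma perms_on_with_True: "perms_on_with (\<lambda>_. True) S = {p. p permutes S}"
  by (simp add: perms_on_with_def)

lemma finite_perms_on_with: "finite S \<Longrightarrow> finite (perms_on_with P S)"
  by (rule finite_subset[OF _ finite_permutations[of S]]) (auto simp: perms_on_with_def)

subsection \<open>Splitting off the cycle through a point\<close>

lemma perm_restrict_cycle_permutes:
  assumes p: "p permutes S" and C: "cyclic_on p C"
  shows "perm_restrict p C permutes C"
proof (rule inj_imp_permutes)
  show "inj_on (perm_restrict p C) C"
    using permutes_inj_on[OF p] by (simp add: inj_on_def perm_restrict_simps)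
  show "finite C" using C by (rule finite_cyclic_on)
  show "perm_restrict p C y \<in> C" if "y \<in> C" for y
    using that cyclic_on_inI[OF C] by (simp add: perm_restrict_simps)
  show "perm_restrict p C y = y" if "y \<notin> C" for y
    using that by (simp add: perm_restrict_simps)
qed

lemma orbit_perm_restrict:
  assumes "perm_restrict p A permutes A" and "y \<in> A"
  shows "orbit (perm_restrict p A) y = orbit p y"
  by (rule orbit_cong0[OF \<open>y \<in> A\<close>]) (use permutes_in_image[OF assms(1)] in \<open>auto simp: perm_restrict_simps\<close>)

lemma perm_restrict_compose_disjoint:
  assumes q: "q permutes A" and r: "r permutes B" and AB: "A \<inter> B = {}"
  shows "perm_restrict (q \<circ> r) A = q" and "perm_restrict (q \<circ> r) B = r"
proof -
  have "r y = y" if "y \<in> A" for y using that AB permutes_not_in[OF r] by blast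
  with q show "perm_restrict (q \<circ> r) A = q"
    by (auto simp: fun_eq_iff perm_restrict_def permutes_not_in)
  have "q (r y) = r y" if "y \<in> B" for y
    using that AB permutes_in_image[OF r] permutes_not_in[OF q] by blast
  with r show "perm_restrict (q \<circ> r) B = r"
    by (auto simp: fun_eq_iff perm_restrict_def permutes_not_in)
qed

lemma perm_restrict_cycle_split:
  assumes fin: "finite S" and x: "x \<in> C" and CS: "C \<subseteq> S"
    and pP: "p \<in> perms_on_with P S" and px: "orbit p x = C"
  shows "perm_restrict p C \<in> cyclic_perms x C"
    and "perm_restrict p (S - C) \<in> perms_on_with P (S - C)"
    and "perm_restrict p C \<circ> perm_restrict p (S - C) = p"
proof -
  have p: "p permutes S" using pP by (simp add: perms_on_with_def)
  have "cyclic_on p C" using cyclic_on_orbit[OF p fin, of x] px by simp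
  with p have perms: "perm_restrict p C permutes C" "perm_restrict p (S - C) permutes S - C"
    by (auto intro: perm_restrict_cycle_permutes perm_restrict_diff_cyclic)
  show "perm_restrict p C \<in> cyclic_perms x C"
    using orbit_perm_restrict[OF perms(1) x] perms(1) px by (simp add: cyclic_perms_def)
  have "orbit (perm_restrict p (S - C)) y = orbit p y" if "y \<in> S - C" for y
    using orbit_perm_restrict[OF perms(2) that] .
  with pP perms(2) show "perm_restrict p (S - C) \<in> perms_on_with P (S - C)"
    by (auto simp: perms_on_with_def)
  have "perm_restrict p C \<circ> perm_restrict p (S - C) = perm_restrict p (C \<union> (S - C))"
    by (rule perm_restrict_union) (use perms in auto)
  also have "C \<union> (S - C) = S" using CS by auto
  finally show "perm_restrict p C \<circ> perm_restrict p (S - C) = p" using p by (simp add: comp_def)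
qed

lemma cyclic_perm_compose_mem_perms_on_with:
  assumes x: "x \<in> C" and CS: "C \<subseteq> S" and PC: "P (card C)"
    and "q \<in> cyclic_perms x C" and rP: "r \<in> perms_on_with P (S - C)"
  shows "q \<circ> r \<in> perms_on_with P S" and "orbit (q \<circ> r) x = C"
proof -
  have q: "q permutes C" "orbit q x = C" and r: "r permutes S - C"
    using assms(4) rP by (auto simp: cyclic_perms_def perms_on_with_def)
  have disj: "C \<inter> (S - C) = {}" by blast
  have orbit_C: "orbit (q \<circ> r) y = C" if "y \<in> C" for y
    using orbit_perm_restrict[of "q \<circ> r" C y] that q(1)
      orbit_cyclic_eq3[OF cyclic_on_singleI[OF x q(2)[symmetric]]]
    by (simp add: perm_restrict_compose_disjoint[OF q(1) r disj])
  then show "orbit (q \<circ> r) x = C" using x .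
  have orbit_r: "orbit (q \<circ> r) y = orbit r y" if "y \<in> S - C" for y
    using orbit_perm_restrict[of "q \<circ> r" "S - C" y] that r
    by (simp add: perm_restrict_compose_disjoint[OF q(1) r disj])
  have "P (card (orbit (q \<circ> r) y))" if "y \<in> S" for y
  proof (cases "y \<in> C")
    case True
    with orbit_C PC show ?thesis by simp
  next
    case False
    with that orbit_r rP show ?thesis by (simp add: perms_on_with_def)
  qed
  moreover have "q \<circ> r permutes S"
    by (rule permutes_compose[OF permutes_subset[OF r] permutes_subset[OF q(1) CS]]) auto
  ultimately show "q \<circ> r \<in> perms_on_with P S" by (simp add: perms_on_with_def)
qed

lemma bij_betw_perms_on_with_orbit_split:
  assumes "finite S" and "x \<in> C" and "C \<subseteq> S" and "P (card C)"
  shows "bij_betw (\<lambda>p. (perm_restrict p C, perm_restrict p (S - C)))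
           {p\<in>perms_on_with P S. orbit p x = C} (cyclic_perms x C \<times> perms_on_with P (S - C))"
proof (rule bij_betw_byWitness[where f' = "\<lambda>(q, r). q \<circ> r"])
  show "\<forall>p\<in>{p\<in>perms_on_with P S. orbit p x = C}.
          (\<lambda>(q, r). q \<circ> r) (perm_restrict p C, perm_restrict p (S - C)) = p"
    using perm_restrict_cycle_split(3)[OF assms(1-3)] by auto
  show "\<forall>qr\<in>cyclic_perms x C \<times> perms_on_with P (S - C).
          (\<lambda>p. (perm_restrict p C, perm_restrict p (S - C))) ((\<lambda>(q, r). q \<circ> r) qr) = qr"
    by (auto simp: cyclic_perms_def perms_on_with_def perm_restrict_compose_disjoint)
  show "(\<lambda>p. (perm_restrict p C, perm_restrict p (S - C))) ` {p\<in>perms_on_with P S. orbit p x = C}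
          \<subseteq> cyclic_perms x C \<times> perms_on_with P (S - C)"
    using perm_restrict_cycle_split(1,2)[OF assms(1-3)] by auto
  show "(\<lambda>(q, r). q \<circ> r) ` (cyclic_perms x C \<times> perms_on_with P (S - C))
          \<subseteq> {p\<in>perms_on_with P S. orbit p x = C}"
    using cyclic_perm_compose_mem_perms_on_with[where P = P, OF assms(2-4)] by auto
qed

lemma card_perms_on_with_orbit_eq:
  assumes "finite S" and "x \<in> C" and "C \<subseteq> S"
  shows "card {p\<in>perms_on_with P S. orbit p x = C} =
     (if P (card C) then card (cyclic_perms x C) * card (perms_on_with P (S - C)) else 0)"
proof (cases "P (card C)")
  case True
  with bij_betw_same_card[OF bij_betw_perms_on_with_orbit_split[where P = P, OF assms True]] show ?thesis
    by (simp add: card_cartesian_product)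
next
  case False
  with assms have "{p\<in>perms_on_with P S. orbit p x = C} = {}" by (auto simp: perms_on_with_def)
  with False show ?thesis by (simp only: if_False card.empty)
qed

lemma card_perms_on_with_filter_orbit:
  assumes fin: "finite S" and x: "x \<in> S"
  shows "card {p\<in>perms_on_with P S. Q (card (orbit p x))} =
    (\<Sum>C | x \<in> C \<and> C \<subseteq> S.
       if P (card C) \<and> Q (card C) then card (cyclic_perms x C) * card (perms_on_with P (S - C)) else 0)"
proof -
  let ?Cs = "{C. x \<in> C \<and> C \<subseteq> S}"
  have fin_Cs: "finite ?Cs" by (rule finite_subset[of _ "Pow S"]) (use fin in auto)
  have fin_Q: "finite {C\<in>?Cs. Q (card C)}" by (rule finite_subset[OF _ fin_Cs]) blast
  have split: "{p\<in>perms_on_with P S. Q (card (orbit p x))} =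
      (\<Union>C\<in>{C\<in>?Cs. Q (card C)}. {p\<in>perms_on_with P S. orbit p x = C})"
    using permutation_self_in_orbit[OF permutation_permutes[THEN iffD2]] permutes_orbit_subset x fin
    by (fastforce simp: perms_on_with_def)
  have "card {p\<in>perms_on_with P S. Q (card (orbit p x))} =
      (\<Sum>C\<in>{C\<in>?Cs. Q (card C)}. card {p\<in>perms_on_with P S. orbit p x = C})"
    unfolding split
    by (rule card_UN_disjoint) (use fin_Q finite_perms_on_with[OF fin] in auto)
  also have "\<dots> = (\<Sum>C\<in>?Cs. if Q (card C) then card {p\<in>perms_on_with P S. orbit p x = C} else 0)"
    by (rule sum.inter_filter[OF fin_Cs])
  also have "\<dots> = (\<Sum>C\<in>?Cs.
       if P (card C) \<and> Q (card C) then card (cyclic_perms x C) * card (perms_on_with P (S - C)) else 0)"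
    by (intro sum.cong refl) (simp add: card_perms_on_with_orbit_eq[OF fin])
  finally show ?thesis .
qed

lemma sum_Pow_card:
  assumes "finite T"
  shows "(\<Sum>D\<in>Pow T. h (card D)) = (\<Sum>j\<le>card T. (card T choose j) * (h j :: nat))"
proof -
  have "(\<Sum>D\<in>Pow T. h (card D)) = (\<Sum>j\<le>card T. \<Sum>D\<in>{D \<in> Pow T. card D = j}. h (card D))"
    by (rule sum.group[symmetric]) (use assms card_mono in fastforce)+
  also have "\<dots> = (\<Sum>j\<le>card T. (card T choose j) * h j)"
  proof (rule sum.cong[OF refl])
    fix j
    have "(\<Sum>D\<in>{D \<in> Pow T. card D = j}. h (card D)) = (\<Sum>D | D \<subseteq> T \<and> card D = j. h j)"
      by (rule sum.cong) auto
    then show "(\<Sum>D\<in>{D \<in> Pow T. card D = j}. h (card D)) = (card T choose j) * h j"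
      by (simp add: n_subsets[OF assms])
  qed
  finally show ?thesis .
qed

lemma sum_supsets_of_point_card:
  assumes fin: "finite S" and x: "x \<in> S"
  shows "(\<Sum>C | x \<in> C \<and> C \<subseteq> S. f (card C)) = (\<Sum>j<card S. (card S - 1 choose j) * (f (Suc j) :: nat))"
proof -
  have supsets: "{C. x \<in> C \<and> C \<subseteq> S} = insert x ` Pow (S - {x})"
  proof (intro equalityI subsetI)
    fix C assume "C \<in> {C. x \<in> C \<and> C \<subseteq> S}"
    then have "C = insert x (C - {x})" "C - {x} \<in> Pow (S - {x})" by auto
    then show "C \<in> insert x ` Pow (S - {x})" by blast
  qed (use x in auto)
  have inj: "inj_on (insert x) (Pow (S - {x}))" unfolding inj_on_def by blast
  have "(\<Sum>C | x \<in> C \<and> C \<subseteq> S. f (card C)) = (\<Sum>D\<in>Pow (S - {x}). f (card (insert x D)))"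
    unfolding supsets by (simp add: sum.reindex[OF inj])
  also have "\<dots> = (\<Sum>D\<in>Pow (S - {x}). f (Suc (card D)))"
  proof (rule sum.cong[OF refl])
    fix D assume "D \<in> Pow (S - {x})"
    then have "finite D" "x \<notin> D" using finite_subset[of D S] fin by auto
    then show "f (card (insert x D)) = f (Suc (card D))" by simp
  qed
  also have "\<dots> = (\<Sum>j\<le>card S - 1. (card S - 1 choose j) * f (Suc j))"
    using sum_Pow_card[of "S - {x}" "\<lambda>j. f (Suc j)"] fin x by simp
  also have "{..card S - 1} = {..<card S}"
    using card_gt_0_iff[of S] fin x by auto
  finally show ?thesis .
qed

lemma fact_card_eq_sum_cyclic_perms:
  assumes "finite S" and "x \<in> S"
  shows "fact (card S) = (\<Sum>C | x \<in> C \<and> C \<subseteq> S. card (cyclic_perms x C) * fact (card S - card C))"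
proof -
  have rest: "card (perms_on_with (\<lambda>_. True) (S - C)) = fact (card S - card C)" if "C \<subseteq> S" for C
  proof -
    have "card (S - C) = card S - card C"
      using that card_Diff_subset[OF finite_subset[OF _ assms(1)]] by simp
    then show ?thesis using card_permutations[of "S - C"] assms(1) by (simp add: perms_on_with_True)
  qed
  have "fact (card S) = card {p\<in>perms_on_with (\<lambda>_. True) S. True}"
    using card_permutations[OF refl assms(1)] by (simp add: perms_on_with_True)
  also have "\<dots> = (\<Sum>C | x \<in> C \<and> C \<subseteq> S. card (cyclic_perms x C) * card (perms_on_with (\<lambda>_. True) (S - C)))"
    using card_perms_on_with_filter_orbit[OF assms, of "\<lambda>_. True" "\<lambda>_. True"] by simp
  also have "\<dots> = (\<Sum>C | x \<in> C \<and> C \<subseteq> S. card (cyclic_perms x C) * fact (card S - card C))"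
    by (intro sum.cong refl) (simp add: rest)
  finally show ?thesis .
qed

lemma fact_card_eq_sum_supsets:
  assumes "finite S" and "x \<in> S"
  shows "(fact (card S) :: nat) = (\<Sum>C | x \<in> C \<and> C \<subseteq> S. fact (card C - 1) * fact (card S - card C))"
proof -
  let ?n = "card S"
  have "(\<Sum>C | x \<in> C \<and> C \<subseteq> S. fact (card C - 1) * fact (?n - card C)) =
      (\<Sum>j<?n. (?n - 1 choose j) * (fact j * fact (?n - 1 - j)))"
    using sum_supsets_of_point_card[OF assms, of "\<lambda>c. fact (c - 1) * fact (?n - c)"] by simp
  also have "\<dots> = (\<Sum>j<?n. fact (?n - 1))"
  proof (rule sum.cong[OF refl])
    fix j assume "j \<in> {..<?n}"
    then show "(?n - 1 choose j) * (fact j * fact (?n - 1 - j)) = fact (?n - 1)"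
      using binomial_fact_lemma[of j "?n - 1"] by (simp add: mult_ac)
  qed
  also have "\<dots> = fact ?n"
    using assms card_gt_0_iff by (cases ?n) auto
  finally show ?thesis by simp
qed

lemma card_cyclic_perms:
  assumes "finite S" and "x \<in> S"
  shows "card (cyclic_perms x S) = fact (card S - 1)"
  using assms
proof (induction "card S" arbitrary: S rule: less_induct)
  case less
  let ?Cs = "{C. x \<in> C \<and> C \<subseteq> S}"
  have fin_Cs: "finite ?Cs" by (rule finite_subset[of _ "Pow S"]) (use less.prems in auto)
  have S_in: "S \<in> ?Cs" using less.prems by simp
  \<comment> \<open>both sums equal \<open>n!\<close> and agree off \<open>C = S\<close> by induction, so they agree at \<open>C = S\<close>\<close>
  have "card (cyclic_perms x C) = fact (card C - 1)" if "C \<in> ?Cs - {S}" for C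
  proof (rule less.hyps)
    show "card C < card S" using that less.prems(1) by (auto intro: psubset_card_mono)
    show "finite C" using that less.prems(1) by (auto intro: finite_subset)
  qed (use that in simp)
  then have "(\<Sum>C\<in>?Cs - {S}. card (cyclic_perms x C) * fact (card S - card C)) =
      (\<Sum>C\<in>?Cs - {S}. fact (card C - 1) * fact (card S - card C))"
    by (intro sum.cong refl) simp
  with fact_card_eq_sum_cyclic_perms[OF less.prems] fact_card_eq_sum_supsets[OF less.prems]
  show ?case by (simp add: sum.remove[OF fin_Cs S_in])
qed

lemma card_perms_on_with_filter_cycle_length:
  assumes fin: "finite S" and x: "x \<in> S"
    and smaller: "\<And>T. T \<subset> S \<Longrightarrow> card (perms_on_with P T) = g (card T)"
  shows "card {p\<in>perms_on_with P S. Q (card (orbit p x))} =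
     (\<Sum>j<card S. (card S - 1 choose j) *
        (if P (Suc j) \<and> Q (Suc j) then fact j * g (card S - Suc j) else 0))"
proof -
  have "card (cyclic_perms x C) * card (perms_on_with P (S - C)) = fact (card C - 1) * g (card S - card C)"
    if "C \<in> {C. x \<in> C \<and> C \<subseteq> S}" for C
  proof -
    from that have C: "x \<in> C" "C \<subseteq> S" "finite C" using finite_subset[OF _ fin] by auto
    then have "S - C \<subset> S" by blast
    then show ?thesis
      using smaller[of "S - C"] card_Diff_subset[OF C(3,2)] card_cyclic_perms[OF C(3,1)] by simp
  qed
  then have "card {p\<in>perms_on_with P S. Q (card (orbit p x))} =
      (\<Sum>C | x \<in> C \<and> C \<subseteq> S. if P (card C) \<and> Q (card C)
         then fact (card C - 1) * g (card S - card C) else 0)"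
    unfolding card_perms_on_with_filter_orbit[OF fin x] by (intro sum.cong refl) simp
  also have "\<dots> = (\<Sum>j<card S. (card S - 1 choose j) *
        (if P (Suc j) \<and> Q (Suc j) then fact j * g (card S - Suc j) else 0))"
    using sum_supsets_of_point_card[OF fin x,
        of "\<lambda>c. if P c \<and> Q c then fact (c - 1) * g (card S - c) else 0"]
    by (simp cong: if_cong)
  finally show ?thesis .
qed

subsection \<open>Counting permutations of \<open>[n]\<close>\<close>

lemma card_perms_on_with:
  fixes S :: "nat set"
  assumes "finite S"
  shows "card (perms_on_with P S) = card (perms_with P (card S))"
  using assms
proof (induction "card S" arbitrary: S rule: less_induct)
  case less
  let ?g = "\<lambda>m. card (perms_with P m)" and ?n = "card S"
  have smaller: "card (perms_on_with P T) = ?g (card T)" if "T \<subset> U" "finite U" "card U = ?n" for T U :: "nat set"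
  proof (rule less.hyps)
    show "card T < ?n" using that psubset_card_mono by metis
    show "finite T" using that finite_subset psubset_imp_subset by metis
  qed
  show ?case
  proof (cases "S = {}")
    case True
    then show ?thesis by (simp add: perms_with_eq_perms_on_with perms_on_with_def)
  next
    case False
    then obtain x where x: "x \<in> S" by blast
    have one: "1 \<in> {1..?n}" using False less.prems by (simp add: Suc_leI card_gt_0_iff)
    have card_n: "card {1..?n} = ?n" by simp
    \<comment> \<open>\<open>S\<close> and \<open>{1..card S}\<close> satisfy the same recursion, and agree on smaller sets by induction\<close>
    have "card (perms_on_with P S) = card {p\<in>perms_on_with P S. True}" by simp
    also have "\<dots> = (\<Sum>j<?n. (?n - 1 choose j) * (if P (Suc j) then fact j * ?g (?n - Suc j) else 0))"
      using card_perms_on_with_filter_cycle_length[OF less.prems x smaller[OF _ less.prems refl],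
          where Q = "\<lambda>_. True"] by simp
    also have "\<dots> = card {p\<in>perms_on_with P {1..?n}. True}"
      using card_perms_on_with_filter_cycle_length[OF _ one smaller[OF _ _ card_n], where Q = "\<lambda>_. True"]
      by (simp cong: if_cong)
    finally show ?thesis by (simp add: perms_with_eq_perms_on_with)
  qed
qed

lemma card_perms_with_filter_cycle_length:
  assumes x: "x \<in> {1..n}"
  shows "card {p\<in>perms_with P n. Q (cycle_len p x)} =
     (\<Sum>j<n. (n - 1 choose j) *
        (if P (Suc j) \<and> Q (Suc j) then fact j * card (perms_with P (n - Suc j)) else 0))"
proof -
  have "card (perms_on_with P T) = card (perms_with P (card T))" if "T \<subset> {1..n}" for T
    using that by (intro card_perms_on_with) (auto intro: finite_subset)
  from card_perms_on_with_filter_cycle_length[OF _ x this, where Q = Q] show ?thesis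
    by (simp add: perms_with_eq_perms_on_with cycle_len_def cong: if_cong)
qed

lemma card_perms_with_rec:
  assumes "1 \<le> n"
  shows "card (perms_with P n) =
     (\<Sum>j<n. (n - 1 choose j) * (if P (Suc j) then fact j * card (perms_with P (n - Suc j)) else 0))"
  using card_perms_with_filter_cycle_length[of 1 n P "\<lambda>_. True"] assms by simp

lemma sum_card_filter_swap:
  assumes "finite A" and "finite B"
  shows "(\<Sum>a\<in>A. card {b\<in>B. R a b}) = (\<Sum>b\<in>B. card {a\<in>A. R a b})"
proof -
  have "(\<Sum>a\<in>A. card {b\<in>B. R a b}) = (\<Sum>a\<in>A. \<Sum>b\<in>B. if R a b then 1 else 0)"
    using assms(2) by (simp add: sum.If_cases Int_def conj_commute)
  also have "\<dots> = (\<Sum>b\<in>B. \<Sum>a\<in>A. if R a b then 1 else 0)" by (rule sum.swap)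
  also have "\<dots> = (\<Sum>b\<in>B. card {a\<in>A. R a b})"
    using assms(1) by (simp add: sum.If_cases Int_def conj_commute)
  finally show ?thesis .
qed

lemma sum_Y:
  assumes k: "1 \<le> k" "k \<le> n" and "P k"
  shows "(\<Sum>p\<in>perms_with P n. Y n k p) = n * ((n - 1 choose (k - 1)) * fact (k - 1) * card (perms_with P (n - k)))"
proof -
  have "(\<Sum>p\<in>perms_with P n. Y n k p) = (\<Sum>x\<in>{1..n}. card {p\<in>perms_with P n. cycle_len p x = k})"
    unfolding Y_def
    by (rule sum_card_filter_swap) (simp_all add: perms_with_eq_perms_on_with finite_perms_on_with)
  also have "\<dots> = (\<Sum>x\<in>{1..n}. (n - 1 choose (k - 1)) * fact (k - 1) * card (perms_with P (n - k)))"
  proof (rule sum.cong[OF refl])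
    fix x assume "x \<in> {1..n}"
    then have "card {p\<in>perms_with P n. cycle_len p x = k} =
        (\<Sum>j<n. (n - 1 choose j) *
          (if P (Suc j) \<and> Suc j = k then fact j * card (perms_with P (n - Suc j)) else 0))"
      by (rule card_perms_with_filter_cycle_length[where Q = "\<lambda>c. c = k"])
    also have "\<dots> = (\<Sum>j<n. if j = k - 1 then (n - 1 choose j) * (fact j * card (perms_with P (n - Suc j))) else 0)"
      using k \<open>P k\<close> by (intro sum.cong refl) auto
    also have "\<dots> = (n - 1 choose (k - 1)) * fact (k - 1) * card (perms_with P (n - k))"
      using k by (simp add: sum.delta Suc_diff_le)
    finally show "card {p\<in>perms_with P n. cycle_len p x = k} =
        (n - 1 choose (k - 1)) * fact (k - 1) * card (perms_with P (n - k))" .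
  qed
  finally show ?thesis by simp
qed

subsection \<open>The probability of a restricted cycle type\<close>

definition prob_perms_with :: "(nat \<Rightarrow> bool) \<Rightarrow> nat \<Rightarrow> real" where
  "prob_perms_with P n = card (perms_with P n) / fact n"

lemma prob_perms_with_0: "prob_perms_with P 0 = 1"
  by (simp add: prob_perms_with_def perms_with_def)

lemma EY_eq_prob_ratio:
  assumes k: "1 \<le> k" "k \<le> n" and Pk: "P k"
  shows "EY P n k = prob_perms_with P (n - k) / prob_perms_with P n"
proof -
  have "fact (k - 1) * fact (n - k) * (n - 1 choose (k - 1)) = (fact (n - 1) :: nat)"
    using binomial_fact_lemma[of "k - 1" "n - 1"] k by simp
  then have "real (fact (k - 1) * fact (n - k) * (n - 1 choose (k - 1))) = fact (n - 1)"
    by (metis of_nat_fact)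
  moreover have "(fact n :: real) = real n * fact (n - 1)" using k fact_reduce[of n] by simp
  ultimately have "real (n * ((n - 1 choose (k - 1)) * fact (k - 1) * card (perms_with P (n - k)))) =
      fact n / fact (n - k) * card (perms_with P (n - k))"
    by (simp add: field_simps)
  then have "EY P n k = fact n / fact (n - k) * card (perms_with P (n - k)) / card (perms_with P n)"
    unfolding EY_def by (simp add: sum_Y[where P = P, OF k Pk] flip: of_nat_sum)
  then show ?thesis by (simp add: prob_perms_with_def field_simps)
qed

lemma prob_perms_with_rec:
  "real n * prob_perms_with P n = (\<Sum>j<n. if P (Suc j) then prob_perms_with P (n - Suc j) else 0)"
proof (cases n)
  case (Suc l)
  have "card (perms_with P n) =
      (\<Sum>j<n. (l choose j) * (if P (Suc j) then fact j * card (perms_with P (n - Suc j)) else 0))"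
    using card_perms_with_rec[of n P] Suc by simp
  then have "real (card (perms_with P n)) =
      (\<Sum>j<n. real ((l choose j) * (if P (Suc j) then fact j * card (perms_with P (n - Suc j)) else 0)))"
    by (simp only: of_nat_sum)
  also have "\<dots> = (\<Sum>j<n. fact l * (if P (Suc j) then prob_perms_with P (n - Suc j) else 0))"
  proof (rule sum.cong[OF refl])
    fix j assume "j \<in> {..<n}"
    then have "real (fact j * fact (l - j) * (l choose j)) = fact l"
      using binomial_fact_lemma[of j l] Suc by (metis lessThan_iff less_Suc_eq_le of_nat_fact)
    then show "real ((l choose j) * (if P (Suc j) then fact j * card (perms_with P (n - Suc j)) else 0)) =
        fact l * (if P (Suc j) then prob_perms_with P (n - Suc j) else 0)"
      by (auto simp: prob_perms_with_def Suc field_simps)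
  qed
  also have "\<dots> = fact l * (\<Sum>j<n. if P (Suc j) then prob_perms_with P (n - Suc j) else 0)"
    by (simp add: sum_distrib_left)
  finally have "real (card (perms_with P n)) =
      fact l * (\<Sum>j<n. if P (Suc j) then prob_perms_with P (n - Suc j) else 0)" .
  moreover have "(fact n :: real) = real n * fact l" using Suc by simp
  ultimately show ?thesis by (simp add: prob_perms_with_def[of P n] field_simps)
qed simp

lemma prob_perms_with_rec_periodic:
  assumes per: "\<And>j. P (Suc (Suc j)) = P j" and n: "2 \<le> n"
  shows "real n * prob_perms_with P n = (if P 1 then prob_perms_with P (n - 1) else 0) +
      (if P 2 then prob_perms_with P (n - 2) else 0) + real (n - 2) * prob_perms_with P (n - 2)"
proof -
  let ?b = "prob_perms_with P"
  obtain l where l: "n = Suc (Suc l)" using n by (metis add_2_eq_Suc le_Suc_ex)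
  have "real n * ?b n = (\<Sum>j<Suc (Suc l). if P (Suc j) then ?b (n - Suc j) else 0)"
    using prob_perms_with_rec[of n P] l by simp
  also have "\<dots> = (if P 1 then ?b (n - 1) else 0) + ((if P 2 then ?b (n - 2) else 0) +
        (\<Sum>j<l. if P (Suc (Suc (Suc j))) then ?b (n - Suc (Suc (Suc j))) else 0))"
    by (simp only: sum.lessThan_Suc_shift) (simp add: numeral_2_eq_2)
  also have "(\<Sum>j<l. if P (Suc (Suc (Suc j))) then ?b (n - Suc (Suc (Suc j))) else 0) =
      (\<Sum>j<l. if P (Suc j) then ?b (l - Suc j) else 0)"
    by (intro sum.cong refl) (simp add: per l)
  also have "\<dots> = real l * ?b l" by (simp add: prob_perms_with_rec)
  finally show ?thesis using l by simp
qed

text \<open>This is \<open>(2m choose m) / 4^m\<close>, the coefficient of \<open>x^(2m)\<close> in \<open>(1 - x^2)^(-1/2)\<close>.\<close>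

definition central_binomial_ratio :: "nat \<Rightarrow> real" where
  "central_binomial_ratio m = (\<Prod>i<m. (2 * real i + 1) / (2 * real i + 2))"

lemma central_binomial_ratio_Suc:
  "central_binomial_ratio (Suc m) = central_binomial_ratio m * ((2 * real m + 1) / (2 * real m + 2))"
  by (simp add: central_binomial_ratio_def)

lemma central_binomial_ratio_pos: "0 < central_binomial_ratio m"
  unfolding central_binomial_ratio_def by (rule prod_pos) (auto simp: field_simps)

lemma prob_perms_with_odd:
  "prob_perms_with odd (2 * m) = central_binomial_ratio m \<and>
   prob_perms_with odd (2 * m + 1) = central_binomial_ratio m"
proof (induction m)
  case 0
  show ?case using prob_perms_with_rec[of 1 odd] by (simp add: prob_perms_with_0 central_binomial_ratio_def)
next
  case (Suc m)
  let ?b = "prob_perms_with odd" and ?c = central_binomial_ratio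
  have "real (2 * m + 2) * ?b (2 * m + 2) = (2 * real m + 1) * ?c m"
    using prob_perms_with_rec_periodic[of odd "2 * m + 2"] Suc.IH by (simp add: algebra_simps)
  then have even_case: "?b (2 * m + 2) = ?c (Suc m)"
    by (simp add: central_binomial_ratio_Suc field_simps)
  have "real (2 * m + 3) * ?b (2 * m + 3) = ?c (Suc m) + (2 * real m + 1) * ?c m"
    using prob_perms_with_rec_periodic[of odd "2 * m + 3"] Suc.IH even_case by (simp add: numeral_3_eq_3)
  also have "(2 * real m + 1) * ?c m = (2 * real m + 2) * ?c (Suc m)"
    by (simp add: central_binomial_ratio_Suc field_simps)
  finally have "real (2 * m + 3) * ?b (2 * m + 3) = real (2 * m + 3) * ?c (Suc m)"
    by (simp add: algebra_simps)
  then have "?b (2 * m + 3) = ?c (Suc m)" by (simp only: mult_cancel_left of_nat_eq_0_iff) simp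
  with even_case show ?case by (simp add: numeral_3_eq_3)
qed

lemma prob_perms_with_even:
  "prob_perms_with even (2 * m) = central_binomial_ratio m \<and> prob_perms_with even (2 * m + 1) = 0"
proof (induction m)
  case 0
  show ?case using prob_perms_with_rec[of 1 even] by (simp add: prob_perms_with_0 central_binomial_ratio_def)
next
  case (Suc m)
  let ?b = "prob_perms_with even" and ?c = central_binomial_ratio
  have "real (2 * m + 2) * ?b (2 * m + 2) = (2 * real m + 1) * ?c m"
    using prob_perms_with_rec_periodic[of even "2 * m + 2"] Suc.IH by (simp add: algebra_simps)
  then have "?b (2 * m + 2) = ?c (Suc m)"
    by (simp add: central_binomial_ratio_Suc field_simps)
  moreover have "?b (2 * m + 3) = 0"
    using prob_perms_with_rec_periodic[of even "2 * m + 3"] Suc.IH by (simp add: numeral_3_eq_3)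
  ultimately show ?case by (simp add: numeral_3_eq_3)
qed

subsection \<open>Asymptotics of the central binomial ratio\<close>

lemma central_binomial_ratio_quotient:
  assumes "r \<le> m"
  shows "central_binomial_ratio (m - r) / central_binomial_ratio m =
    (\<Prod>i\<in>{m - r..<m}. 1 + 1 / (2 * real i + 1))"
proof -
  let ?f = "\<lambda>i::nat. (2 * real i + 1) / (2 * real i + 2)"
  have "central_binomial_ratio m = central_binomial_ratio (m - r) * (\<Prod>i\<in>{m - r..<m}. ?f i)"
    unfolding central_binomial_ratio_def lessThan_atLeast0
    using prod.atLeastLessThan_concat[of 0 "m - r" m ?f] assms by simp
  moreover have "(\<Prod>i\<in>{m - r..<m}. 1 + 1 / (2 * real i + 1)) * (\<Prod>i\<in>{m - r..<m}. ?f i) = 1"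
  proof (subst prod.distrib[symmetric], rule prod.neutral, rule ballI)
    fix i :: nat
    have pos: "0 < 2 * real i + 1" "0 < 2 * real i + 2" using of_nat_0_le_iff[of i] by linarith+
    then have "1 + 1 / (2 * real i + 1) = (2 * real i + 2) / (2 * real i + 1)" by (simp add: field_simps)
    with pos show "(1 + 1 / (2 * real i + 1)) * ?f i = 1" by simp
  qed
  ultimately show ?thesis using central_binomial_ratio_pos[of "m - r"] by (simp add: field_simps)
qed

lemma one_plus_power_le:
  fixes a :: real
  assumes a: "0 \<le> a" and ra: "real r * a \<le> 1"
  shows "(1 + a) ^ r \<le> 1 + real r * a + (real r * a)\<^sup>2"
  using ra
proof (induction r)
  case (Suc r)
  have ra: "real r * a \<le> 1" using Suc.prems a by (simp add: algebra_simps)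
  have "(1 + a) ^ Suc r \<le> (1 + a) * (1 + real r * a + (real r * a)\<^sup>2)"
    using mult_left_mono[OF Suc.IH[OF ra], of "1 + a"] a by simp
  also have "\<dots> = 1 + real (Suc r) * a + (real (Suc r) * a)\<^sup>2 - (real r * a * a * (1 - real r * a) + a * a)"
    by (simp add: algebra_simps power2_eq_square)
  also have "\<dots> \<le> 1 + real (Suc r) * a + (real (Suc r) * a)\<^sup>2"
  proof -
    have "0 \<le> real r * a * a * (1 - real r * a)" using ra a by (intro mult_nonneg_nonneg) simp_all
    then show ?thesis using mult_nonneg_nonneg[OF a a] by linarith
  qed
  finally show ?case .
qed simp

lemma central_binomial_ratio_quotient_ge:
  assumes "1 \<le> m" and "r \<le> m"
  shows "1 + real r / (2 * real m) \<le> central_binomial_ratio (m - r) / central_binomial_ratio m"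
proof -
  have "- 1 \<le> 1 / (2 * real m)" by (rule order_trans[of _ 0]) simp_all
  from Bernoulli_inequality[OF this, of r]
  have "1 + real r / (2 * real m) \<le> (1 + 1 / (2 * real m)) ^ r" by simp
  also have "\<dots> = (\<Prod>i\<in>{m - r..<m}. 1 + 1 / (2 * real m))" using assms by simp
  also have "\<dots> \<le> (\<Prod>i\<in>{m - r..<m}. 1 + 1 / (2 * real i + 1))"
    by (rule prod_mono) (use assms in \<open>auto intro!: divide_left_mono simp: of_nat_less_iff[symmetric] simp del: of_nat_less_iff\<close>)
  finally show ?thesis using central_binomial_ratio_quotient assms(2) by simp
qed

lemma central_binomial_ratio_quotient_le:
  assumes m: "1 \<le> m" and r: "2 * r \<le> m"
  shows "central_binomial_ratio (m - r) / central_binomial_ratio m \<le>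
    1 + real r / (2 * real m) + 2 * (real r)\<^sup>2 / (real m)\<^sup>2"
proof -
  define M where "M = real m"
  define a where "a = 1 / (2 * M) + real r / M\<^sup>2"
  have M: "1 \<le> M" "2 * real r \<le> M" using m r by (simp_all add: M_def)
  \<comment> \<open>each factor has \<open>2i + 1 \<ge> 2 (m - r)\<close>, and \<open>1 / (2 (M - r)) \<le> a\<close> amounts to \<open>2r \<le> M\<close>\<close>
  have factor: "1 / (2 * real i + 1) \<le> a" if "i \<in> {m - r..<m}" for i
  proof -
    have "1 / (2 * real i + 1) \<le> 1 / (2 * (M - real r))"
      using that r M by (intro divide_left_mono) (auto simp: M_def)
    also have "\<dots> \<le> a"
    proof -
      have "real r * (real r * 2) \<le> M * real r" using mult_right_mono[OF M(2), of "real r"] by simp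
      then show ?thesis using M by (simp add: a_def field_simps power2_eq_square)
    qed
    finally show ?thesis .
  qed
  have a_le: "a \<le> 1 / M"
    using M by (simp add: a_def field_simps power2_eq_square)
  have "(\<Prod>i\<in>{m - r..<m}. 1 + 1 / (2 * real i + 1)) \<le> (\<Prod>i\<in>{m - r..<m}. 1 + a)"
    by (rule prod_mono) (use factor in auto)
  also have "\<dots> = (1 + a) ^ r" using r by simp
  also have "\<dots> \<le> 1 + real r * a + (real r * a)\<^sup>2"
  proof (rule one_plus_power_le)
    show "0 \<le> a" using M by (simp add: a_def)
    have "real r * a \<le> real r / M" using mult_left_mono[OF a_le, of "real r"] by simp
    also have "\<dots> \<le> 1" using M by (simp add: field_simps)
    finally show "real r * a \<le> 1" .
  qed
  also have "(real r * a)\<^sup>2 \<le> (real r / M)\<^sup>2"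
    using mult_left_mono[OF a_le, of "real r"] M by (intro power_mono) (simp_all add: a_def)
  finally show ?thesis
    using central_binomial_ratio_quotient[of r m] r
    by (simp add: M_def a_def power_divide algebra_simps power2_eq_square)
qed

lemma central_binomial_ratio_quotient_approx:
  assumes "1 \<le> m" and "2 * r \<le> m"
  shows "\<bar>central_binomial_ratio (m - r) / central_binomial_ratio m - (1 + real r / (2 * real m))\<bar>
    \<le> 2 * (real r)\<^sup>2 / (real m)\<^sup>2"
  using central_binomial_ratio_quotient_ge[of m r] central_binomial_ratio_quotient_le[OF assms] assms
  by (simp add: abs_le_iff)

lemma EYo_even_approx:
  assumes "odd k" and "even n" and "2 * k + 2 \<le> n"
  shows "\<bar>EYo n k - (1 + (real k + 1) / (2 * real n))\<bar> \<le> 2 * (real k + 1)\<^sup>2 / (real n)\<^sup>2"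
proof -
  obtain j m where k: "k = 2 * j + 1" and n: "n = 2 * m" using assms(1,2) by (meson evenE oddE)
  have m: "1 \<le> m" "2 * (j + 1) \<le> m" using assms(3) by (simp_all add: k n)
  have "n - k = 2 * (m - (j + 1)) + 1" using m by (simp add: k n)
  then have "EYo n k = central_binomial_ratio (m - (j + 1)) / central_binomial_ratio m"
    using EY_eq_prob_ratio[of k n odd] prob_perms_with_odd assms(1) m by (simp add: k n)
  moreover have "(real k + 1) / (2 * real n) = real (j + 1) / (2 * real m)"
    using m by (simp add: k n field_simps)
  moreover have "2 * (real k + 1)\<^sup>2 / (real n)\<^sup>2 = 2 * (real (j + 1))\<^sup>2 / (real m)\<^sup>2"
    using m by (simp add: k n power2_eq_square field_simps)
  ultimately show ?thesis using central_binomial_ratio_quotient_approx[OF m] by simp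
qed

lemma EYo_odd_approx:
  assumes "odd k" and "odd n" and "2 * k \<le> n"
  shows "\<bar>EYo n k - (1 + (real k - 1) / (2 * real n))\<bar> \<le> 9 * (real k)\<^sup>2 / (real n)\<^sup>2"
proof -
  obtain j m where k: "k = 2 * j + 1" and n: "n = 2 * m + 1" using assms(1,2) by (meson oddE)
  define J M where "J = real j" and "M = real m"
  have m: "1 \<le> m" "2 * j \<le> m" using assms(3) by (simp_all add: k n)
  have M: "1 \<le> M" "0 \<le> J" using m by (simp_all add: J_def M_def)
  have "n - k = 2 * (m - j)" using m by (simp add: k n)
  then have "EYo n k = central_binomial_ratio (m - j) / central_binomial_ratio m"
    using EY_eq_prob_ratio[of k n odd] prob_perms_with_odd assms(1) m by (simp add: k n)
  with central_binomial_ratio_quotient_approx[OF m]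
  have approx: "\<bar>EYo n k - (1 + J / (2 * M))\<bar> \<le> 2 * J\<^sup>2 / M\<^sup>2" by (simp add: J_def M_def)
  \<comment> \<open>moving the centre from \<open>J / (2M)\<close> to \<open>(k - 1) / (2n) = J / (2M + 1)\<close> costs at most \<open>J / M\<^sup>2\<close>\<close>
  have "J / (2 * M) - J / (2 * M + 1) = J / (2 * M * (2 * M + 1))" using M by (simp add: field_simps)
  moreover have "J / (2 * M * (2 * M + 1)) \<le> J / M\<^sup>2"
  proof (rule divide_left_mono[OF _ M(2)])
    show "M\<^sup>2 \<le> 2 * M * (2 * M + 1)" using M by (simp add: power2_eq_square algebra_simps)
    show "0 < 2 * M * (2 * M + 1) * M\<^sup>2" using M by simp
  qed
  moreover have "0 \<le> J / (2 * M * (2 * M + 1))" using M by simp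
  moreover have "(real k - 1) / (2 * real n) = J / (2 * M + 1)" by (simp add: k n J_def M_def field_simps)
  ultimately have "\<bar>EYo n k - (1 + (real k - 1) / (2 * real n))\<bar> \<le> (2 * J\<^sup>2 + J) / M\<^sup>2"
    using approx by (simp add: abs_le_iff add_divide_distrib)
  also have "\<dots> \<le> (real k)\<^sup>2 / M\<^sup>2"
    using M by (intro divide_right_mono) (simp_all add: k J_def M_def power2_eq_square algebra_simps)
  also have "\<dots> \<le> 9 * (real k)\<^sup>2 / (real n)\<^sup>2"
  proof -
    have "(real n)\<^sup>2 \<le> (3 * M)\<^sup>2" using M by (intro power_mono) (simp_all add: n J_def M_def)
    then have "(real n)\<^sup>2 / 9 \<le> M\<^sup>2" by (simp add: power_mult_distrib)
    then have "(real k)\<^sup>2 / M\<^sup>2 \<le> (real k)\<^sup>2 / ((real n)\<^sup>2 / 9)"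
      using M by (intro divide_left_mono) (simp_all add: n)
    then show ?thesis by (simp add: mult.commute)
  qed
  finally show ?thesis .
qed

lemma EYe_even_approx:
  assumes "even k" and "0 < k" and "even n" and "2 * k \<le> n"
  shows "\<bar>EYe n k - (1 + real k / (2 * real n))\<bar> \<le> 2 * (real k)\<^sup>2 / (real n)\<^sup>2"
proof -
  obtain j m where k: "k = 2 * j" and n: "n = 2 * m" using assms(1,3) by (meson evenE)
  have m: "1 \<le> m" "2 * j \<le> m" using assms(2,4) by (simp_all add: k n)
  have "n - k = 2 * (m - j)" using m by (simp add: k n)
  then have "EYe n k = central_binomial_ratio (m - j) / central_binomial_ratio m"
    using EY_eq_prob_ratio[of k n even] prob_perms_with_even assms m by (simp add: k n)
  moreover have "real k / (2 * real n) = real j / (2 * real m)"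
    using m by (simp add: k n field_simps)
  moreover have "2 * (real k)\<^sup>2 / (real n)\<^sup>2 = 2 * (real j)\<^sup>2 / (real m)\<^sup>2"
    using m by (simp add: k n power2_eq_square field_simps)
  ultimately show ?thesis using central_binomial_ratio_quotient_approx[OF m] by simp
qed

theorem proposition3p3:
  shows "(\<forall>k::nat. odd k \<longrightarrow>
            (\<exists>C N. \<forall>n\<ge>N. even n \<longrightarrow>
               \<bar>EYo n k - (1 + (real k + 1) / (2 * real n))\<bar> \<le> C / (real n)^2) \<and>
            (\<exists>C N. \<forall>n\<ge>N. odd n \<longrightarrow>
               \<bar>EYo n k - (1 + (real k - 1) / (2 * real n))\<bar> \<le> C / (real n)^2))
       \<and> (\<forall>k::nat. even k \<and> k > 0 \<longrightarrow>
            (\<exists>C N. \<forall>n\<ge>N. even n \<longrightarrow>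
               \<bar>EYe n k - (1 + real k / (2 * real n))\<bar> \<le> C / (real n)^2))"
proof (intro conjI allI impI)
  fix k :: nat
  assume k: "odd k"
  show "\<exists>C N. \<forall>n\<ge>N. even n \<longrightarrow> \<bar>EYo n k - (1 + (real k + 1) / (2 * real n))\<bar> \<le> C / (real n)^2"
    using EYo_even_approx[OF k] by blast
  show "\<exists>C N. \<forall>n\<ge>N. odd n \<longrightarrow> \<bar>EYo n k - (1 + (real k - 1) / (2 * real n))\<bar> \<le> C / (real n)^2"
    using EYo_odd_approx[OF k] by blast
next
  fix k :: nat
  assume "even k \<and> k > 0"
  then show "\<exists>C N. \<forall>n\<ge>N. even n \<longrightarrow> \<bar>EYe n k - (1 + real k / (2 * real n))\<bar> \<le> C / (real n)^2"
    using EYe_even_approx by blast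
qed

end
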